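(* Let $f(x_1,\ldots,x_n)=\gamma x_1^{\alpha_1}\cdots x_n^{\alpha_n}$ be an $n$-input Cobb–Douglas production function, where $\gamma>0$ and $\alpha_1,\ldots,\alpha_n$ are nonzero constants. Then the production hypersurface $\Phi(f)=\{(x,f(x))\}$ is isotropic minimal in $\mathbf{I}^{n+1}$ if and only if $f=\gamma x_1\cdots x_n$ for some nonzero constant $\gamma$ (i.e. $\alpha_1=\cdots=\alpha_n=1$).
   Context: The isotropic space $\mathbf{I}^{n+1}$ is $\mathbb{R}^{n+1}$ with the degenerate isotropic metric, the $x_{n+1}$-direction being isotropic; the graph $\Phi(f)=\{(x,f(x)):x\in D\}$ of a function $f$ on a domain $D\subset\mathbb{R}^n$ is regarded as a hypersurface in $\mathbf{I}^{n+1}$. Its isotropic mean curvature is $K_1=\frac1n\operatorname{trace}(D^2f)=\frac1n\Delta f$ with $\Delta=\sum_j\partial^2/\partial x_j^2$; $\Phi(f)$ is isotropic minimal if $K_1\equiv0$, i.e. $\Delta f=0$. *)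

theory Defs
  imports "HOL-Analysis.Analysis"
begin

definition partial_deriv :: "'n::finite \<Rightarrow> (real^'n \<Rightarrow> real) \<Rightarrow> real^'n \<Rightarrow> real" where
  "partial_deriv j g x = deriv (\<lambda>t. g (x + t *\<^sub>R axis j 1)) 0"

definition laplacian :: "(real^'n::finite \<Rightarrow> real) \<Rightarrow> real^'n \<Rightarrow> real" where
  "laplacian g x = (\<Sum>j\<in>UNIV. partial_deriv j (partial_deriv j g) x)"

text \<open>Isotropic mean curvature K_1 = (1/n) Delta f of the graph hypersurface.\<close>
definition isotropic_mean_curvature :: "(real^'n::finite \<Rightarrow> real) \<Rightarrow> real^'n \<Rightarrow> real" where
  "isotropic_mean_curvature g x = laplacian g x / real CARD('n)"

definition isotropic_minimal :: "(real^'n::finite \<Rightarrow> real) \<Rightarrow> (real^'n) set \<Rightarrow> bool" where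
  "isotropic_minimal g D \<longleftrightarrow> (\<forall>x\<in>D. isotropic_mean_curvature g x = 0)"

definition pos_orthant :: "(real^'n::finite) set" where
  "pos_orthant = {x. \<forall>i. 0 < x $ i}"

definition cobb_douglas :: "real \<Rightarrow> ('n::finite \<Rightarrow> real) \<Rightarrow> real^'n \<Rightarrow> real" where
  "cobb_douglas \<gamma> \<alpha> x = \<gamma> * (\<Prod>i\<in>UNIV. (x $ i) powr (\<alpha> i))"

end

theory Submission
  imports Defs
begin

text \<open>Along the \<open>j\<close>-th coordinate line \<open>f\<close> is a constant multiple of \<open>x\<^sub>j powr \<alpha>\<^sub>j\<close>,
  so \<open>\<partial>\<^sub>j\<^sup>2 f = f \<cdot> \<alpha>\<^sub>j (\<alpha>\<^sub>j - 1) / x\<^sub>j\<^sup>2\<close> and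
  \<open>\<Delta>f = f \<cdot> \<Sum>\<^sub>j \<alpha>\<^sub>j (\<alpha>\<^sub>j - 1) / x\<^sub>j\<^sup>2\<close> on the positive orthant. Since \<open>f > 0\<close>, minimality means
  that this sum vanishes for all \<open>x\<close>; evaluating at \<open>(1,\<dots>,1)\<close> and at the point with
  \<open>x\<^sub>k = 1/2\<close> and all other coordinates \<open>1\<close> gives \<open>\<alpha>\<^sub>k (\<alpha>\<^sub>k - 1) = 0\<close>, i.e. \<open>\<alpha>\<^sub>k = 1\<close>.\<close>

definition cobb_douglas_cofactor :: "real \<Rightarrow> ('n::finite \<Rightarrow> real) \<Rightarrow> 'n \<Rightarrow> real^'n \<Rightarrow> real" where
  "cobb_douglas_cofactor \<gamma> \<alpha> j x = \<gamma> * (\<Prod>i\<in>UNIV-{j}. (x $ i) powr (\<alpha> i))"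

lemma cobb_douglas_along_axis:
  "cobb_douglas \<gamma> \<alpha> (x + t *\<^sub>R axis j 1) = cobb_douglas_cofactor \<gamma> \<alpha> j x * (x $ j + t) powr \<alpha> j"
proof -
  let ?y = "x + t *\<^sub>R axis j 1"
  have "(\<Prod>i\<in>UNIV. (?y $ i) powr (\<alpha> i)) = (?y $ j) powr (\<alpha> j) * (\<Prod>i\<in>UNIV-{j}. (?y $ i) powr (\<alpha> i))"
    by (rule prod.remove) auto
  also have "(\<Prod>i\<in>UNIV-{j}. (?y $ i) powr (\<alpha> i)) = (\<Prod>i\<in>UNIV-{j}. (x $ i) powr (\<alpha> i))"
    by (rule prod.cong) (auto simp: axis_def)
  finally show ?thesis
    unfolding cobb_douglas_def cobb_douglas_cofactor_def by (simp add: axis_def)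
qed

lemma cobb_douglas_eq_cofactor_mult:
  "cobb_douglas \<gamma> \<alpha> x = cobb_douglas_cofactor \<gamma> \<alpha> j x * x $ j powr \<alpha> j"
  using cobb_douglas_along_axis[of \<gamma> \<alpha> x 0 j] by simp

lemma cobb_douglas_cofactor_along_axis:
  "cobb_douglas_cofactor \<gamma> \<alpha> j (x + t *\<^sub>R axis j 1) = cobb_douglas_cofactor \<gamma> \<alpha> j x"
  unfolding cobb_douglas_cofactor_def
  by (intro arg_cong2[where f="(*)"] refl prod.cong) (auto simp: axis_def)

lemma partial_deriv_cobb_douglas:
  assumes "x $ j > 0"
  shows "partial_deriv j (cobb_douglas \<gamma> \<alpha>) x
       = cobb_douglas_cofactor \<gamma> \<alpha> j x * (\<alpha> j * x $ j powr (\<alpha> j - 1))"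
proof -
  have "((\<lambda>t. cobb_douglas_cofactor \<gamma> \<alpha> j x * (x $ j + t) powr \<alpha> j) has_real_derivative
          cobb_douglas_cofactor \<gamma> \<alpha> j x * (\<alpha> j * x $ j powr (\<alpha> j - 1))) (at 0)"
    using assms by (auto intro!: derivative_eq_intros)
  then show ?thesis
    unfolding partial_deriv_def cobb_douglas_along_axis by (rule DERIV_imp_deriv)
qed

lemma second_partial_deriv_cobb_douglas:
  assumes "x $ j > 0"
  shows "partial_deriv j (partial_deriv j (cobb_douglas \<gamma> \<alpha>)) x
       = cobb_douglas \<gamma> \<alpha> x * (\<alpha> j * (\<alpha> j - 1) / (x $ j)\<^sup>2)"
proof -
  let ?C = "cobb_douglas_cofactor \<gamma> \<alpha> j x"
  let ?g = "\<lambda>t. ?C * (\<alpha> j * (x $ j + t) powr (\<alpha> j - 1))"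
  let ?D = "?C * (\<alpha> j * ((\<alpha> j - 1) * x $ j powr (\<alpha> j - 1 - 1)))"
  have "(?g has_real_derivative ?D) (at 0)"
    using assms by (auto intro!: derivative_eq_intros)
  \<comment> \<open>the first partial derivative agrees with \<open>?g\<close> only where \<open>x\<^sub>j + t > 0\<close>\<close>
  then have "((\<lambda>t. partial_deriv j (cobb_douglas \<gamma> \<alpha>) (x + t *\<^sub>R axis j 1)) has_real_derivative ?D) (at 0)"
  proof (rule has_field_derivative_transform_within_open[where S="{- x $ j<..}"])
    fix t assume "t \<in> {- x $ j<..}"
    then have "(x + t *\<^sub>R axis j 1) $ j > 0" by (simp add: axis_def)
    then show "?g t = partial_deriv j (cobb_douglas \<gamma> \<alpha>) (x + t *\<^sub>R axis j 1)"
      by (simp add: partial_deriv_cobb_douglas cobb_douglas_cofactor_along_axis)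
  qed (use assms in auto)
  then have "partial_deriv j (partial_deriv j (cobb_douglas \<gamma> \<alpha>)) x = ?D"
    unfolding partial_deriv_def[of j "partial_deriv j _"] by (rule DERIV_imp_deriv)
  also have "\<dots> = cobb_douglas \<gamma> \<alpha> x * (\<alpha> j * (\<alpha> j - 1) / (x $ j)\<^sup>2)"
    using assms by (simp add: cobb_douglas_eq_cofactor_mult[of \<gamma> \<alpha> x j] powr_diff
        power2_eq_square field_simps)
  finally show ?thesis .
qed

lemma laplacian_cobb_douglas:
  assumes "x \<in> pos_orthant"
  shows "laplacian (cobb_douglas \<gamma> \<alpha>) x
       = cobb_douglas \<gamma> \<alpha> x * (\<Sum>j\<in>UNIV. \<alpha> j * (\<alpha> j - 1) / (x $ j)\<^sup>2)"
  using assms unfolding laplacian_def pos_orthant_def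
  by (simp add: second_partial_deriv_cobb_douglas sum_distrib_left)

lemma cobb_douglas_pos:
  assumes "\<gamma> > 0" and "x \<in> pos_orthant"
  shows "cobb_douglas \<gamma> \<alpha> x > 0"
  using assms unfolding cobb_douglas_def pos_orthant_def
  by (intro mult_pos_pos prod_pos) (auto simp: less_le)

lemma sum_divide_square_vanishes_on_pos_orthant_iff:
  fixes c :: "'n::finite \<Rightarrow> real"
  shows "(\<forall>x\<in>pos_orthant. (\<Sum>j\<in>UNIV. c j / (x $ j)\<^sup>2) = 0) \<longleftrightarrow> (\<forall>j. c j = 0)"
proof
  assume vanish: "\<forall>x\<in>pos_orthant. (\<Sum>j\<in>UNIV. c j / (x $ j)\<^sup>2) = 0"
  have sum_c: "(\<Sum>j\<in>UNIV. c j) = 0"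
    using vanish[rule_format, of "\<chi> i. 1"] by (simp add: pos_orthant_def)
  show "\<forall>k. c k = 0"
  proof
    fix k
    define x :: "real^'n" where "x = (\<chi> i. if i = k then 1/2 else 1)"
    have "x \<in> pos_orthant" by (simp add: x_def pos_orthant_def)
    moreover have "(\<Sum>j\<in>UNIV. c j / (x $ j)\<^sup>2) = (\<Sum>j\<in>UNIV. c j + (if j = k then 3 * c j else 0))"
      by (rule sum.cong) (auto simp: x_def power2_eq_square)
    ultimately show "c k = 0"
      using vanish sum_c by (simp add: sum.distrib)
  qed
qed simp

lemma isotropic_minimal_cobb_douglas_iff:
  assumes "\<gamma> > 0"
  shows "isotropic_minimal (cobb_douglas \<gamma> \<alpha>) pos_orthant
     \<longleftrightarrow> (\<forall>j. \<alpha> j * (\<alpha> j - 1) = 0)"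
proof -
  have "isotropic_mean_curvature (cobb_douglas \<gamma> \<alpha>) x = 0
      \<longleftrightarrow> (\<Sum>j\<in>UNIV. \<alpha> j * (\<alpha> j - 1) / (x $ j)\<^sup>2) = 0"
    if "x \<in> pos_orthant" for x
    using cobb_douglas_pos[OF assms that, of \<alpha>]
    by (simp add: isotropic_mean_curvature_def laplacian_cobb_douglas[OF that])
  then show ?thesis
    unfolding isotropic_minimal_def
    using sum_divide_square_vanishes_on_pos_orthant_iff[of "\<lambda>j. \<alpha> j * (\<alpha> j - 1)"] by auto
qed

theorem proposition4p2:
  fixes \<gamma> :: real and \<alpha> :: "'n::finite \<Rightarrow> real"
  assumes "\<gamma> > 0" and "\<forall>i. \<alpha> i \<noteq> 0"
  shows "isotropic_minimal (cobb_douglas \<gamma> \<alpha>) pos_orthant \<longleftrightarrow> (\<forall>i. \<alpha> i = 1)"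
  using assms by (simp add: isotropic_minimal_cobb_douglas_iff)

end
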